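(* In the setting below, there is a constant $C_1>0$ depending only on $K$ such that for each $f\in D_I$ and $i\in I$ there exist $g=\sum_{n\ge0}g_nt^n\in D_i'$ and $h=\sum_{n\ge0}h_nt^n\in D_i$ with $f=g+h$, $|g|_t\le|f|_t$ and $|h|_t\le|f|_t$; moreover, if $i=1$ then $\|h_n\|<C_1$ for all $n\ge0$, and if $i\ne1$ then $\|g_n\|<C_1$ for all $n\ge0$.
   Context: Let $K$ be a number field with ring of integers $R$; for $x\in K$ put $\|x\|=\max_{\sigma\in\operatorname{Hom}(K,\mathbb{C})}|\sigma(x)|$, and for a subring $S\subseteq K$ let $S\{t\}=\{\sum_{n\ge0}a_nt^n\in S[[t]]:\limsup_n\|a_n\|^{1/n}\le1\}$. Let $I$ be a finite index set containing the symbol $1$, and for each $i\in I$ let $a_i\in R$ be nonzero and not a unit, with $a_iR+a_jR=R$ for distinct $i,j\in I$. For $J\subseteq I$ let $a_J=\prod_{j\in J}a_j$ ($a_\emptyset=1$), $R_J=R[1/a_J]$, and $D_J=R_J\{t\}$ if $1\notin J$, $D_J=R_J[[t]]$ if $1\in J$; all are subrings of $D_I=R_I[[t]]$. For $i\in I$ put $D_i=D_{I\setminus\{i\}}$ and $D_i'=D_{\{i\}}$. $|\cdot|_t=e^{-v_t}$ is the $t$-adic absolute value on $R_I[[t]]$. *)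

theory Defs
  imports "HOL-Analysis.Analysis" "HOL-Computational_Algebra.Polynomial"
    "HOL-Computational_Algebra.Formal_Power_Series" "HOL-Library.Liminf_Limsup"
begin

text \<open>A number field is modelled as a subfield K of the complex numbers that is
  finite-dimensional over the rationals.\<close>
definition number_field :: "complex set \<Rightarrow> bool" where
  "number_field K \<longleftrightarrow>
     0 \<in> K \<and> 1 \<in> K \<and>
     (\<forall>x\<in>K. \<forall>y\<in>K. x + y \<in> K \<and> x * y \<in> K) \<and>
     (\<forall>x\<in>K. - x \<in> K \<and> inverse x \<in> K) \<and>
     (\<exists>B. finite B \<and> B \<subseteq> K \<and>
        (\<forall>x\<in>K. \<exists>c. (\<forall>b\<in>B. c b \<in> \<rat>) \<and> x = (\<Sum>b\<in>B. c b * b)))"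

text \<open>Field embeddings K \<rightarrow> C (made extensional: zero outside K).\<close>
definition embeddings :: "complex set \<Rightarrow> (complex \<Rightarrow> complex) set" where
  "embeddings K = {\<sigma>. (\<forall>x\<in>K. \<forall>y\<in>K. \<sigma> (x + y) = \<sigma> x + \<sigma> y \<and> \<sigma> (x * y) = \<sigma> x * \<sigma> y)
      \<and> \<sigma> 1 = 1 \<and> (\<forall>x. x \<notin> K \<longrightarrow> \<sigma> x = 0)}"

definition house :: "complex set \<Rightarrow> complex \<Rightarrow> real" where
  "house K x = Max ((\<lambda>\<sigma>. cmod (\<sigma> x)) ` embeddings K)"

definition algebraic_integer :: "complex \<Rightarrow> bool" where
  "algebraic_integer x \<longleftrightarrow>
     (\<exists>p :: int poly. lead_coeff p = 1 \<and> poly (map_poly of_int p) x = 0)"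

definition ring_of_integers :: "complex set \<Rightarrow> complex set" where
  "ring_of_integers K = {x \<in> K. algebraic_integer x}"

definition aJ :: "(nat \<Rightarrow> complex) \<Rightarrow> nat set \<Rightarrow> complex" where
  "aJ a J = (\<Prod>j\<in>J. a j)"

definition RJ :: "complex set \<Rightarrow> (nat \<Rightarrow> complex) \<Rightarrow> nat set \<Rightarrow> complex set" where
  "RJ K a J = {r / (aJ a J) ^ k | r k. r \<in> ring_of_integers K}"

definition small_growth :: "complex set \<Rightarrow> complex fps \<Rightarrow> bool" where
  "small_growth K f \<longleftrightarrow>
     limsup (\<lambda>n. ereal (root n (house K (fps_nth f n)))) \<le> 1"

definition DJ :: "complex set \<Rightarrow> (nat \<Rightarrow> complex) \<Rightarrow> nat set \<Rightarrow> complex fps set" where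
  "DJ K a J = {f. (\<forall>n. fps_nth f n \<in> RJ K a J) \<and> (1 \<notin> J \<longrightarrow> small_growth K f)}"

definition tabs :: "complex fps \<Rightarrow> real" where
  "tabs f = (if f = 0 then 0 else exp (- real (subdegree f)))"

end

theory Submission
  imports Defs "Jordan_Normal_Form.Char_Poly"
begin

(* Write \<alpha> = a_i and \<beta> = a_{I-{i}}.  The pairwise comaximality of the a_j makes
   \<alpha> and \<beta>, hence \<alpha>^k and \<beta>^k, comaximal in R, and R_I = R[1/(\<alpha>\<beta>)].  Every coefficient
   x = r/(\<alpha>\<beta>)^k of f therefore has a partial fraction decomposition
   x = rY/\<alpha>^k + rX/\<beta>^k  (from \<alpha>^k X + \<beta>^k Y = 1), and shifting an element \<rho> of R from the
   first summand to the second we may arrange that the R[1/\<alpha>]-part has house at most a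
   covering radius C0 of the lattice R in K (every x \<in> K lies within house-distance C0 of R).
   Doing this coefficientwise (zero coefficients split as 0 + 0, which keeps |.|_t under
   control) gives f = g + h; the summand with bounded coefficients lies in the S{t}-part of the
   statement because bounded houses have limsup of n-th roots at most 1.  C1 = C0 + 1.

   When i = 1 the bound is put on the R[1/\<beta>]-part instead, by exchanging \<alpha> and \<beta>. *)

section \<open>Algebraic integers form a ring\<close>

lemma algebraic_integer_iff_algebraic_int: "algebraic_integer x \<longleftrightarrow> algebraic_int x"
  unfolding algebraic_integer_def algebraic_int_altdef_ipoly by auto

text \<open>An eigenvalue of an integer matrix is a root of its monic integer characteristic
  polynomial, hence an algebraic integer.\<close>
lemma algebraic_integer_eigenvalue:
  fixes A :: "int mat" and V :: "complex vec"
  assumes A: "A \<in> carrier_mat N N" and V: "V \<in> carrier_vec N" "V \<noteq> 0\<^sub>v N"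
    and eigen: "map_mat of_int A *\<^sub>v V = w \<cdot>\<^sub>v V"
  shows "algebraic_integer w"
proof -
  have A': "map_mat of_int A \<in> carrier_mat N N" using A by simp
  have "eigenvector (map_mat of_int A) V w"
    unfolding eigenvector_def using A V eigen by auto
  hence "eigenvalue (map_mat of_int A) w" unfolding eigenvalue_def by blast
  hence "poly (char_poly (map_mat of_int A)) w = 0"
    by (rule iffD1[OF eigenvalue_root_char_poly[OF A']])
  moreover have "char_poly (map_mat (of_int::int\<Rightarrow>complex) A) = map_poly of_int (char_poly A)"
    by (rule of_int_hom.char_poly_hom[OF A])
  moreover have "lead_coeff (char_poly A) = 1"
    using degree_monic_char_poly[OF A] by simp
  ultimately show ?thesis unfolding algebraic_integer_def by auto
qed

lemma algebraic_integer_by_module: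
  fixes S :: "'i set" and v :: "'i \<Rightarrow> complex"
  assumes fin: "finite S" and nz: "\<exists>s\<in>S. v s \<noteq> 0"
    and stable: "\<forall>s\<in>S. \<exists>c. w * v s = (\<Sum>t\<in>S. of_int (c t) * v t)"
  shows "algebraic_integer w"
proof -
  define N where "N = card S"
  obtain h where h: "bij_betw h {0..<N} S" using ex_bij_betw_nat_finite[OF fin] N_def by blast
  obtain C where C: "\<forall>s\<in>S. w * v s = (\<Sum>t\<in>S. of_int (C s t) * v t)"
    using stable by metis
  define A where "A = mat N N (\<lambda>(k,l). C (h k) (h l))"
  define V where "V = vec N (\<lambda>k. v (h k))"
  have A: "A \<in> carrier_mat N N" and V: "V \<in> carrier_vec N" unfolding A_def V_def by simp_all
  have hk: "k < N \<Longrightarrow> h k \<in> S" for k using h unfolding bij_betw_def by auto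
  have reindex: "(\<Sum>l<N. g (h l)) = (\<Sum>t\<in>S. g t)" for g :: "'i \<Rightarrow> complex"
    using sum.reindex_bij_betw[OF h, of g] by (simp add: atLeast0LessThan)
  have V0: "V \<noteq> 0\<^sub>v N"
  proof
    assume "V = 0\<^sub>v N"
    then have "\<forall>k<N. v (h k) = 0" unfolding V_def by (metis index_vec index_zero_vec(1))
    moreover obtain s where s: "s \<in> S" "v s \<noteq> 0" using nz by blast
    moreover obtain k where "k < N" "h k = s"
      using h s(1) unfolding bij_betw_def by auto
    ultimately show False by auto
  qed
  have "map_mat of_int A *\<^sub>v V = w \<cdot>\<^sub>v V"
  proof (rule eq_vecI)
    fix k assume "k < dim_vec (w \<cdot>\<^sub>v V)"
    hence k: "k < N" using V by simp
    have "(map_mat of_int A *\<^sub>v V) $ k = (\<Sum>l<N. of_int (C (h k) (h l)) * v (h l))"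
      using k A V unfolding A_def V_def
      by (simp add: mult_mat_vec_def scalar_prod_def atLeast0LessThan)
    also have "\<dots> = (\<Sum>t\<in>S. of_int (C (h k) t) * v t)" by (rule reindex)
    also have "\<dots> = w * v (h k)" using C hk[OF k] by simp
    also have "\<dots> = (w \<cdot>\<^sub>v V) $ k" using k unfolding V_def by simp
    finally show "(map_mat of_int A *\<^sub>v V) $ k = (w \<cdot>\<^sub>v V) $ k" .
  qed (use A V in simp)
  then show ?thesis by (rule algebraic_integer_eigenvalue[OF A V V0])
qed

text \<open>The powers of an algebraic integer of degree n lie in the \<int>-span of 1, x, ..., x^(n-1):
  reduce x^n with the monic minimal relation.\<close>
lemma algebraic_integer_powers_span:
  assumes "algebraic_integer x"
  shows "\<exists>n>0. \<forall>k. \<exists>c::nat\<Rightarrow>int. x ^ k = (\<Sum>i<n. of_int (c i) * x ^ i)"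
proof -
  obtain p :: "int poly" where p1: "lead_coeff p = 1" and p0: "poly (map_poly of_int p) x = 0"
    using assms unfolding algebraic_integer_def by blast
  define n where "n = degree p"
  have "n \<noteq> 0"
  proof
    assume "n = 0"
    hence "p = [:1:]" using p1 unfolding n_def
      by (metis leading_coeff_0_iff pCons_0_0 degree_eq_zeroE lead_coeff_pCons(2) one_pCons)
    thus False using p0 by simp
  qed
  then obtain m where m: "n = Suc m" using not0_implies_Suc by blast
  have "(\<Sum>i\<le>n. of_int (coeff p i) * x ^ i) = 0"
    using p0 unfolding poly_altdef n_def by (simp add: coeff_map_poly degree_map_poly)
  hence xn: "x ^ n = - (\<Sum>i<n. of_int (coeff p i) * x ^ i)"
    using p1 unfolding n_def
    by (simp add: lessThan_Suc_atMost[symmetric] eq_neg_iff_add_eq_0 add.commute)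
  have "\<exists>c::nat\<Rightarrow>int. x ^ k = (\<Sum>i<n. of_int (c i) * x ^ i)" for k
  proof (induction k)
    case 0
    have "(\<Sum>i<n. of_int (if i = 0 then 1 else 0) * x ^ i) = (\<Sum>i<n. if i = 0 then 1 else (0::complex))"
      by (rule sum.cong) auto
    also have "\<dots> = 1" using m by (simp add: sum.delta)
    finally show ?case by (intro exI[of _ "\<lambda>i. if i = 0 then 1 else 0"]) simp
  next
    case (Suc k)
    then obtain c where c: "x ^ k = (\<Sum>i<n. of_int (c i) * x ^ i)" by blast
    define d where "d = (\<lambda>i. (if i = 0 then 0 else c (i - 1)) - c m * coeff p i)"
    have "x ^ Suc k = (\<Sum>i<m. of_int (c i) * x ^ Suc i) + of_int (c m) * x ^ n"
      using c m by (simp add: sum_distrib_left algebra_simps)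
    also have "\<dots> = (\<Sum>i<m. of_int (c i) * x ^ Suc i) - (\<Sum>i<n. of_int (c m * coeff p i) * x ^ i)"
      by (simp add: xn sum_distrib_left algebra_simps)
    also have "(\<Sum>i<m. of_int (c i) * x ^ Suc i) = (\<Sum>i<n. of_int (if i = 0 then 0 else c (i - 1)) * x ^ i)"
      unfolding m by (subst sum.lessThan_Suc_shift) simp
    finally have "x ^ Suc k = (\<Sum>i<n. of_int (d i) * x ^ i)"
      unfolding d_def by (simp add: sum_subtractf algebra_simps)
    thus ?case by blast
  qed
  thus ?thesis using m by blast
qed

text \<open>Sums and products of algebraic integers are algebraic integers: both stabilise the
  finitely generated module spanned by the monomials x^i y^j.\<close>
lemma algebraic_integer_add_mult:
  assumes x: "algebraic_integer x" and y: "algebraic_integer y"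
  shows "algebraic_integer (x + y)" "algebraic_integer (x * y)"
proof -
  obtain n where n: "n > 0" "\<forall>k. \<exists>c::nat\<Rightarrow>int. x ^ k = (\<Sum>i<n. of_int (c i) * x ^ i)"
    using algebraic_integer_powers_span[OF x] by blast
  obtain m where m: "m > 0" "\<forall>k. \<exists>c::nat\<Rightarrow>int. y ^ k = (\<Sum>i<m. of_int (c i) * y ^ i)"
    using algebraic_integer_powers_span[OF y] by blast
  define S where "S = {..<n} \<times> {..<m}"
  define v where "v = (\<lambda>(i::nat, j::nat). x ^ i * y ^ j)"
  define span where "span = {z. \<exists>c::nat\<times>nat\<Rightarrow>int. z = (\<Sum>t\<in>S. of_int (c t) * v t)}"
  have finS: "finite S" unfolding S_def by simp
  have nz: "\<exists>s\<in>S. v s \<noteq> 0" using n m unfolding S_def v_def by (intro bexI[of _ "(0,0)"]) auto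
  have span_add: "z1 + z2 \<in> span" if z: "z1 \<in> span" "z2 \<in> span" for z1 z2
  proof -
    obtain c1 c2 where "z1 = (\<Sum>t\<in>S. of_int (c1 t) * v t)" "z2 = (\<Sum>t\<in>S. of_int (c2 t) * v t)"
      using z unfolding span_def by blast
    hence "z1 + z2 = (\<Sum>t\<in>S. of_int (c1 t + c2 t) * v t)"
      by (simp add: sum.distrib algebra_simps)
    thus ?thesis unfolding span_def by (intro CollectI exI[of _ "\<lambda>t. c1 t + c2 t"])
  qed
  have span_monomial: "x ^ i * y ^ j \<in> span" for i j
  proof -
    obtain a where a: "x ^ i = (\<Sum>k<n. of_int (a k) * x ^ k)" using n by blast
    obtain b where b: "y ^ j = (\<Sum>k<m. of_int (b k) * y ^ k)" using m by blast
    have "x ^ i * y ^ j = (\<Sum>k<n. \<Sum>l<m. (of_int (a k) * x ^ k) * (of_int (b l) * y ^ l))"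
      unfolding a b by (rule sum_product)
    also have "\<dots> = (\<Sum>t\<in>S. of_int ((\<lambda>(k,l). a k * b l) t) * v t)"
      unfolding S_def v_def sum.cartesian_product by (rule sum.cong) (auto simp: algebra_simps)
    finally show ?thesis unfolding span_def by blast
  qed
  show "algebraic_integer (x + y)"
  proof (rule algebraic_integer_by_module[OF finS nz], intro ballI)
    fix s assume "s \<in> S"
    obtain i j where s: "s = (i, j)" by fastforce
    have "(x + y) * v s = x ^ Suc i * y ^ j + x ^ i * y ^ Suc j"
      unfolding s v_def by (simp add: algebra_simps)
    also have "\<dots> \<in> span" by (intro span_add span_monomial)
    finally show "\<exists>c. (x + y) * v s = (\<Sum>t\<in>S. of_int (c t) * v t)" unfolding span_def by blast
  qed
  show "algebraic_integer (x * y)"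
  proof (rule algebraic_integer_by_module[OF finS nz], intro ballI)
    fix s assume "s \<in> S"
    obtain i j where s: "s = (i, j)" by fastforce
    have "(x * y) * v s = x ^ Suc i * y ^ Suc j"
      unfolding s v_def by (simp add: algebra_simps)
    also have "\<dots> \<in> span" by (rule span_monomial)
    finally show "\<exists>c. (x * y) * v s = (\<Sum>t\<in>S. of_int (c t) * v t)" unfolding span_def by blast
  qed
qed

lemma common_denominator:
  fixes q :: "'a \<Rightarrow> complex"
  assumes "finite S" "\<forall>s\<in>S. q s \<in> \<rat>"
  shows "\<exists>D::int. D > 0 \<and> (\<forall>s\<in>S. of_int D * q s \<in> \<int>)"
  using assms
proof (induction S rule: finite_induct)
  case empty show ?case by (intro exI[of _ 1]) simp
next
  case (insert x F)
  then obtain D where D: "D > 0" "\<forall>s\<in>F. of_int D * q s \<in> \<int>" by auto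
  from insert have "q x \<in> \<rat>" by simp
  then obtain a b where ab: "b > 0" "q x = of_int a / of_int b" by (rule Rats_cases')
  have "of_int (D * b) * q s \<in> \<int>" if s: "s \<in> insert x F" for s
  proof (cases "s = x")
    case True thus ?thesis using ab by (simp add: field_simps)
  next
    case False
    then have "of_int D * q s \<in> \<int>" using D s by blast
    moreover have "of_int (D * b) * q s = of_int b * (of_int D * q s)" by simp
    ultimately show ?thesis by (metis Ints_mult Ints_of_int)
  qed
  thus ?case using D ab by (intro exI[of _ "D * b"]) simp
qed

lemma tabs_le_if_zeros_preserved:
  assumes "\<forall>n. fps_nth f n = 0 \<longrightarrow> fps_nth g n = 0"
  shows "tabs g \<le> tabs f"
proof (cases "g = 0")
  case True thus ?thesis unfolding tabs_def by simp
next
  case False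
  have "fps_nth g (subdegree g) \<noteq> 0" using False by simp
  hence f_nz: "fps_nth f (subdegree g) \<noteq> 0" using assms by blast
  hence "subdegree f \<le> subdegree g" by (rule subdegree_leI)
  moreover have "f \<noteq> 0" using f_nz by auto
  ultimately show ?thesis unfolding tabs_def using False by simp
qed

lemma bounded_house_small_growth:
  assumes "\<forall>n. house K (fps_nth f n) \<le> C"
  shows "small_growth K f"
proof -
  define C' where "C' = max C 1"
  have "eventually (\<lambda>n. ereal (root n (house K (fps_nth f n))) \<le> ereal (root n C')) sequentially"
  proof (rule eventually_sequentiallyI[of 1])
    fix n :: nat assume "n \<ge> 1"
    hence "root n (house K (fps_nth f n)) \<le> root n C'"
      using assms unfolding C'_def by (subst real_root_le_iff) (auto intro: le_max_iff_disj[THEN iffD2])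
    thus "ereal (root n (house K (fps_nth f n))) \<le> ereal (root n C')" by simp
  qed
  hence "limsup (\<lambda>n. ereal (root n (house K (fps_nth f n)))) \<le> limsup (\<lambda>n. ereal (root n C'))"
    by (rule Limsup_mono)
  also have "limsup (\<lambda>n. ereal (root n C')) = ereal 1"
    by (rule lim_imp_Limsup) (auto intro!: tendsto_ereal LIMSEQ_root_const simp: C'_def)
  finally show ?thesis unfolding small_growth_def by (simp add: one_ereal_def)
qed

lemma fps_split_coefficientwise:
  assumes "\<forall>n. \<exists>u v. Q n u v \<and> fps_nth f n = u + v \<and> (fps_nth f n = 0 \<longrightarrow> u = 0 \<and> v = 0)"
  shows "\<exists>g h. f = g + h \<and> (\<forall>n. Q n (fps_nth g n) (fps_nth h n)) \<and>
           tabs g \<le> tabs f \<and> tabs h \<le> tabs f"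
proof -
  obtain u where "\<forall>n. \<exists>v. Q n (u n) v \<and> fps_nth f n = u n + v \<and>
      (fps_nth f n = 0 \<longrightarrow> u n = 0 \<and> v = 0)"
    using choice[OF assms] by blast
  from choice[OF this] obtain v where "\<forall>n. Q n (u n) (v n) \<and> fps_nth f n = u n + v n \<and>
      (fps_nth f n = 0 \<longrightarrow> u n = 0 \<and> v n = 0)" by blast
  then have uv: "Q n (u n) (v n)" "fps_nth f n = u n + v n"
    "fps_nth f n = 0 \<Longrightarrow> u n = 0" "fps_nth f n = 0 \<Longrightarrow> v n = 0" for n by blast+
  have "f = Abs_fps u + Abs_fps v" by (rule fps_ext) (simp add: uv(2))
  moreover have "tabs (Abs_fps u) \<le> tabs f" "tabs (Abs_fps v) \<le> tabs f"
    using uv(3,4) by (auto intro!: tabs_le_if_zeros_preserved)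
  ultimately show ?thesis using uv(1) by (intro exI[of _ "Abs_fps u"] exI[of _ "Abs_fps v"]) simp
qed

section \<open>A number field, its embeddings and the house\<close>

locale numfield =
  fixes K :: "complex set"
  assumes number_field: "number_field K"
begin

lemma K_0: "0 \<in> K" and K_1: "1 \<in> K"
  and K_add: "x \<in> K \<Longrightarrow> y \<in> K \<Longrightarrow> x + y \<in> K"
  and K_mult: "x \<in> K \<Longrightarrow> y \<in> K \<Longrightarrow> x * y \<in> K"
  and K_uminus: "x \<in> K \<Longrightarrow> - x \<in> K"
  and K_inverse: "x \<in> K \<Longrightarrow> inverse x \<in> K"
  using number_field unfolding number_field_def by auto

lemma rational_spanning_set:
  "\<exists>B. finite B \<and> B \<subseteq> K \<and> (\<forall>x\<in>K. \<exists>c. (\<forall>b\<in>B. c b \<in> \<rat>) \<and> x = (\<Sum>b\<in>B. c b * b))"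
  using number_field unfolding number_field_def by blast

lemma K_divide: "x \<in> K \<Longrightarrow> y \<in> K \<Longrightarrow> x / y \<in> K"
  using K_mult[OF _ K_inverse, of x y] by (simp add: divide_inverse)

lemma K_of_nat: "of_nat n \<in> K"
  by (induction n) (auto intro: K_add K_0 K_1)

lemma K_of_int: "of_int k \<in> K"
  by (cases k rule: int_cases) (auto intro: K_uminus K_of_nat simp del: of_nat_Suc)

lemma K_Rats: "q \<in> \<rat> \<Longrightarrow> q \<in> K"
  by (erule Rats_cases') (auto intro: K_divide K_of_int)

lemma K_sum: "(\<And>a. a \<in> A \<Longrightarrow> f a \<in> K) \<Longrightarrow> sum f A \<in> K"
  by (induction A rule: infinite_finite_induct) (auto intro: K_add K_0)

lemma K_power: "x \<in> K \<Longrightarrow> x ^ n \<in> K"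
  by (induction n) (auto intro: K_mult K_1)

context
  fixes \<sigma> assumes emb: "\<sigma> \<in> embeddings K"
begin

lemma emb_add: "x \<in> K \<Longrightarrow> y \<in> K \<Longrightarrow> \<sigma> (x + y) = \<sigma> x + \<sigma> y"
  and emb_mult: "x \<in> K \<Longrightarrow> y \<in> K \<Longrightarrow> \<sigma> (x * y) = \<sigma> x * \<sigma> y"
  and emb_1: "\<sigma> 1 = 1"
  and emb_outside: "x \<notin> K \<Longrightarrow> \<sigma> x = 0"
  using emb unfolding embeddings_def by auto

lemma emb_0: "\<sigma> 0 = 0"
  using emb_add[OF K_0 K_0] by simp

lemma emb_uminus: "x \<in> K \<Longrightarrow> \<sigma> (- x) = - \<sigma> x"
  using emb_add[OF _ K_uminus, of x x] emb_0 by (simp add: eq_neg_iff_add_eq_0 add.commute)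

lemma emb_of_nat: "\<sigma> (of_nat n) = of_nat n"
  by (induction n) (simp_all add: emb_0 emb_1 emb_add K_of_nat K_1)

lemma emb_of_int: "\<sigma> (of_int k) = of_int k"
  by (cases k rule: int_cases) (auto simp: emb_uminus emb_of_nat K_of_nat simp del: of_nat_Suc)

lemma emb_Rats: "q \<in> \<rat> \<Longrightarrow> \<sigma> q = q"
proof (erule Rats_cases')
  fix a b :: int assume b: "b > 0" and q: "q = of_int a / of_int b"
  have "\<sigma> q * of_int b = \<sigma> (q * of_int b)"
    using emb_mult[OF K_Rats K_of_int, of q b] emb_of_int[of b] q by simp
  also have "\<dots> = q * of_int b" using q b emb_of_int by simp
  finally show "\<sigma> q = q" using b by simp
qed

lemma emb_sum: "(\<And>a. a \<in> A \<Longrightarrow> f a \<in> K) \<Longrightarrow> \<sigma> (sum f A) = (\<Sum>a\<in>A. \<sigma> (f a))"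
  by (induction A rule: infinite_finite_induct) (auto simp: emb_0 emb_add K_sum)

lemma emb_power: "x \<in> K \<Longrightarrow> \<sigma> (x ^ n) = \<sigma> x ^ n"
  by (induction n) (auto simp: emb_1 emb_mult K_power)

lemma emb_rational_mult: "q \<in> \<rat> \<Longrightarrow> x \<in> K \<Longrightarrow> \<sigma> (q * x) = q * \<sigma> x"
  using emb_mult[OF K_Rats] emb_Rats by simp

lemma emb_poly:
  assumes z: "z \<in> K"
  shows "\<sigma> (poly (map_poly of_int p) z) = poly (map_poly of_int p) (\<sigma> z)"
proof -
  have "\<sigma> (poly (map_poly of_int p) z) = \<sigma> (\<Sum>i\<le>degree p. of_int (coeff p i) * z ^ i)"
    by (simp add: poly_altdef coeff_map_poly of_int_hom.degree_map_poly_hom)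
  also have "\<dots> = (\<Sum>i\<le>degree p. of_int (coeff p i) * \<sigma> z ^ i)"
    using z by (subst emb_sum) (auto intro!: K_mult K_of_int K_power
        simp: emb_mult K_of_int K_power emb_of_int emb_power)
  also have "\<dots> = poly (map_poly of_int p) (\<sigma> z)"
    by (simp add: poly_altdef coeff_map_poly of_int_hom.degree_map_poly_hom)
  finally show ?thesis .
qed

end

lemma inclusion_embedding: "(\<lambda>x. if x \<in> K then x else 0) \<in> embeddings K"
  unfolding embeddings_def using K_add K_mult K_1 by auto

lemma embedding_determined:
  assumes B: "B \<subseteq> K" "\<forall>x\<in>K. \<exists>c. (\<forall>b\<in>B. c b \<in> \<rat>) \<and> x = (\<Sum>b\<in>B. c b * b)"
    and \<sigma>: "\<sigma> \<in> embeddings K" and \<tau>: "\<tau> \<in> embeddings K" and eq: "\<forall>b\<in>B. \<sigma> b = \<tau> b"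
  shows "\<sigma> = \<tau>"
proof
  fix x show "\<sigma> x = \<tau> x"
  proof (cases "x \<in> K")
    case True
    then obtain c where c: "\<forall>b\<in>B. c b \<in> \<rat>" "x = (\<Sum>b\<in>B. c b * b)" using B by blast
    have cbK: "\<And>b. b \<in> B \<Longrightarrow> c b * b \<in> K" using c B K_mult K_Rats by auto
    have "\<sigma> x = (\<Sum>b\<in>B. \<sigma> (c b * b))" using c(2) emb_sum[OF \<sigma>, of B "\<lambda>b. c b * b"] cbK by simp
    also have "\<dots> = (\<Sum>b\<in>B. c b * \<sigma> b)"
      by (rule sum.cong) (use c B emb_rational_mult[OF \<sigma>] in auto)
    also have "\<dots> = (\<Sum>b\<in>B. c b * \<tau> b)" using eq by simp
    also have "\<dots> = (\<Sum>b\<in>B. \<tau> (c b * b))"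
      by (rule sum.cong) (use c B emb_rational_mult[OF \<tau>] in auto)
    also have "\<dots> = \<tau> x" using c(2) emb_sum[OF \<tau>, of B "\<lambda>b. c b * b"] cbK by simp
    finally show ?thesis .
  next
    case False thus ?thesis using emb_outside[OF \<sigma>] emb_outside[OF \<tau>] by simp
  qed
qed

text \<open>Every element of K has a positive integer multiple that is an algebraic integer: multiplication
  by D x stabilises the \<int>-span of a rational spanning set, D a common denominator.\<close>
lemma integral_multiple:
  assumes x: "x \<in> K"
  shows "\<exists>D::int. D > 0 \<and> algebraic_integer (of_int D * x)"
proof -
  obtain B where B: "finite B" "B \<subseteq> K" "\<forall>x\<in>K. \<exists>c. (\<forall>b\<in>B. c b \<in> \<rat>) \<and> x = (\<Sum>b\<in>B. c b * b)"
    using rational_spanning_set by blast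
  have "\<forall>s\<in>B. \<exists>c. (\<forall>b\<in>B. c b \<in> \<rat>) \<and> x * s = (\<Sum>b\<in>B. c b * b)"
    using B x K_mult by blast
  then obtain c where c: "\<forall>s\<in>B. (\<forall>b\<in>B. c s b \<in> \<rat>) \<and> x * s = (\<Sum>b\<in>B. c s b * b)"
    by metis
  have "\<forall>st\<in>B \<times> B. (\<lambda>(s,t). c s t) st \<in> \<rat>" using c by auto
  then obtain D where D: "D > 0" "\<forall>st\<in>B \<times> B. of_int D * (\<lambda>(s,t). c s t) st \<in> \<int>"
    using common_denominator[of "B \<times> B"] B(1) by blast
  have "\<exists>s\<in>B. id s \<noteq> 0"
  proof (rule ccontr)
    assume "\<not> ?thesis"
    hence "(\<Sum>b\<in>B. c1 b * b) = 0" for c1 by (intro sum.neutral) simp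
    moreover obtain c1 where "1 = (\<Sum>b\<in>B. c1 b * b)" using B K_1 by blast
    ultimately show False by simp
  qed
  then have "algebraic_integer (of_int D * x)"
  proof (rule algebraic_integer_by_module[OF B(1)], intro ballI)
    fix s assume s: "s \<in> B"
    have "\<forall>t\<in>B. of_int D * c s t \<in> \<int>" using D s by auto
    hence "\<forall>t\<in>B. \<exists>k. of_int D * c s t = of_int k"
      unfolding Ints_def by (metis rangeE)
    then obtain k where k: "\<forall>t\<in>B. of_int D * c s t = of_int (k t)" by metis
    have "of_int D * x * id s = (\<Sum>t\<in>B. (of_int D * c s t) * t)"
      using c s by (simp add: sum_distrib_left mult.assoc)
    also have "\<dots> = (\<Sum>t\<in>B. of_int (k t) * id t)" using k by simp
    finally show "\<exists>k. of_int D * x * id s = (\<Sum>t\<in>B. of_int (k t) * id t)" by blast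
  qed
  thus ?thesis using D by blast
qed

text \<open>K has only finitely many embeddings: on each element b of a spanning set an embedding
  takes one of the finitely many values root/D of a monic polynomial killing D b.\<close>
lemma finite_embeddings: "finite (embeddings K)"
proof -
  obtain B where B: "finite B" "B \<subseteq> K" "\<forall>x\<in>K. \<exists>c. (\<forall>b\<in>B. c b \<in> \<rat>) \<and> x = (\<Sum>b\<in>B. c b * b)"
    using rational_spanning_set by blast
  have "\<forall>b\<in>B. \<exists>D p. D > (0::int) \<and> lead_coeff p = 1 \<and> poly (map_poly of_int p) (of_int D * b) = 0"
    using integral_multiple B(2) unfolding algebraic_integer_def by blast
  then obtain D p where Dp: "\<forall>b\<in>B. D b > (0::int) \<and> lead_coeff (p b) = 1 \<and>
      poly (map_poly of_int (p b)) (of_int (D b) * b) = 0" by metis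
  define T where "T = (\<lambda>b. (\<lambda>y::complex. y / of_int (D b)) ` {y. poly (map_poly of_int (p b)) y = 0})"
  have finT: "finite (T b)" if "b \<in> B" for b
  proof -
    have "p b \<noteq> 0" using Dp that by auto
    hence "map_poly (of_int :: int \<Rightarrow> complex) (p b) \<noteq> 0" by simp
    from poly_roots_finite[OF this] show ?thesis unfolding T_def by (rule finite_imageI)
  qed
  have restrict_into: "(\<lambda>\<sigma>. restrict \<sigma> B) ` embeddings K \<subseteq> PiE B T"
  proof (rule image_subsetI, rule restrict_PiE_iff[THEN iffD2], intro ballI)
    fix \<sigma> b assume \<sigma>: "\<sigma> \<in> embeddings K" and b: "b \<in> B"
    have bK: "b \<in> K" using b B by auto
    have "poly (map_poly of_int (p b)) (\<sigma> (of_int (D b) * b)) =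
        \<sigma> (poly (map_poly of_int (p b)) (of_int (D b) * b))"
      using emb_poly[OF \<sigma>] bK K_mult K_of_int by simp
    also have "\<dots> = 0" using Dp b emb_0[OF \<sigma>] by simp
    finally have "poly (map_poly of_int (p b)) (of_int (D b) * \<sigma> b) = 0"
      using emb_mult[OF \<sigma> K_of_int bK] emb_of_int[OF \<sigma>] by simp
    moreover have "D b \<noteq> 0" using Dp b by auto
    hence "\<sigma> b = (of_int (D b) * \<sigma> b) / of_int (D b)" by simp
    ultimately show "\<sigma> b \<in> T b" unfolding T_def by blast
  qed
  have "inj_on (\<lambda>\<sigma>. restrict \<sigma> B) (embeddings K)"
  proof (rule inj_onI)
    fix \<sigma> \<tau> assume \<sigma>: "\<sigma> \<in> embeddings K" and \<tau>: "\<tau> \<in> embeddings K"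
      and eq: "restrict \<sigma> B = restrict \<tau> B"
    have "\<forall>b\<in>B. \<sigma> b = \<tau> b" using eq by (metis restrict_apply')
    thus "\<sigma> = \<tau>" by (rule embedding_determined[OF B(2,3) \<sigma> \<tau>])
  qed
  then show ?thesis by (rule inj_on_finite[OF _ restrict_into finite_PiE[OF B(1) finT]])
qed

lemma house_ge: "\<sigma> \<in> embeddings K \<Longrightarrow> cmod (\<sigma> x) \<le> house K x"
  unfolding house_def by (rule Max_ge) (use finite_embeddings in auto)

lemma house_le: "(\<And>\<sigma>. \<sigma> \<in> embeddings K \<Longrightarrow> cmod (\<sigma> x) \<le> C) \<Longrightarrow> house K x \<le> C"
  unfolding house_def using finite_embeddings inclusion_embedding by (subst Max_le_iff) auto

lemma house_nonneg: "0 \<le> house K x"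
  using house_ge[OF inclusion_embedding, of x] by (meson norm_ge_zero order_trans)

lemma house_0: "house K 0 = 0"
proof -
  have "house K 0 \<le> 0" by (rule house_le) (simp add: emb_0)
  thus ?thesis using house_nonneg[of 0] by linarith
qed

end

section \<open>The ring of integers and its covering radius\<close>

abbreviation (in numfield) OK :: "complex set" where "OK \<equiv> ring_of_integers K"

context numfield
begin

lemma OK_in_K: "x \<in> OK \<Longrightarrow> x \<in> K" and OK_integral: "x \<in> OK \<Longrightarrow> algebraic_integer x"
  unfolding ring_of_integers_def by auto

lemma OK_I: "x \<in> K \<Longrightarrow> algebraic_integer x \<Longrightarrow> x \<in> OK"
  unfolding ring_of_integers_def by auto

lemma OK_add: "x \<in> OK \<Longrightarrow> y \<in> OK \<Longrightarrow> x + y \<in> OK"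
  by (rule OK_I[OF K_add[OF OK_in_K OK_in_K] algebraic_integer_add_mult(1)[OF OK_integral OK_integral]])

lemma OK_mult: "x \<in> OK \<Longrightarrow> y \<in> OK \<Longrightarrow> x * y \<in> OK"
  by (rule OK_I[OF K_mult[OF OK_in_K OK_in_K] algebraic_integer_add_mult(2)[OF OK_integral OK_integral]])

lemma OK_uminus: "x \<in> OK \<Longrightarrow> - x \<in> OK"
  using OK_in_K OK_integral OK_I K_uminus
  by (simp add: algebraic_integer_iff_algebraic_int algebraic_int_minus)

lemma OK_diff: "x \<in> OK \<Longrightarrow> y \<in> OK \<Longrightarrow> x - y \<in> OK"
  using OK_add[OF _ OK_uminus, of x y] by simp

lemma OK_of_int: "of_int k \<in> OK"
  by (rule OK_I[OF K_of_int]) (simp add: algebraic_integer_iff_algebraic_int)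

lemma OK_0: "0 \<in> OK" and OK_1: "1 \<in> OK"
  using OK_of_int[of 0] OK_of_int[of 1] by simp_all

lemma OK_sum: "(\<And>a. a \<in> A \<Longrightarrow> f a \<in> OK) \<Longrightarrow> sum f A \<in> OK"
  by (induction A rule: infinite_finite_induct) (simp_all add: OK_0 OK_add)

lemma OK_prod: "(\<And>a. a \<in> A \<Longrightarrow> f a \<in> OK) \<Longrightarrow> prod f A \<in> OK"
  by (induction A rule: infinite_finite_induct) (simp_all add: OK_1 OK_mult)

lemma OK_power: "x \<in> OK \<Longrightarrow> x ^ n \<in> OK"
  by (induction n) (simp_all add: OK_1 OK_mult)

text \<open>The lattice R has finite covering radius with respect to the house: write x \<in> K in a
  basis w_b of integral elements with rational coordinates and round the coordinates down.\<close>
lemma covering_radius: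
  "\<exists>C0\<ge>0. \<forall>x\<in>K. \<exists>\<rho>\<in>OK. house K (x - \<rho>) \<le> C0"
proof -
  obtain B where B: "finite B" "B \<subseteq> K" "\<forall>x\<in>K. \<exists>c. (\<forall>b\<in>B. c b \<in> \<rat>) \<and> x = (\<Sum>b\<in>B. c b * b)"
    using rational_spanning_set by blast
  obtain D where D: "\<forall>b\<in>B. D b > 0 \<and> algebraic_integer (of_int (D b) * b)"
    using integral_multiple B(2) by (metis subsetD)
  define w where "w = (\<lambda>b. of_int (D b) * b)"
  have wO: "w b \<in> OK" if "b \<in> B" for b
    using that B(2) D unfolding w_def by (auto intro!: OK_I K_mult K_of_int)
  define C0 where "C0 = (\<Sum>b\<in>B. house K (w b))"
  have "\<exists>\<rho>\<in>OK. house K (x - \<rho>) \<le> C0" if x: "x \<in> K" for x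
  proof -
    obtain c where c: "\<forall>b\<in>B. c b \<in> \<rat>" "x = (\<Sum>b\<in>B. c b * b)" using B x by blast
    define e where "e = (\<lambda>b. c b / of_int (D b))"
    have eQ: "e b \<in> \<rat>" if "b \<in> B" for b using c that unfolding e_def by auto
    have xe: "x = (\<Sum>b\<in>B. e b * w b)"
      unfolding c(2) e_def w_def by (rule sum.cong) (use D in auto)
    define \<rho> where "\<rho> = (\<Sum>b\<in>B. of_int \<lfloor>Re (e b)\<rfloor> * w b)"
    define t where "t = (\<lambda>b. e b - of_int \<lfloor>Re (e b)\<rfloor>)"
    have tQ: "t b \<in> \<rat>" if "b \<in> B" for b using eQ[OF that] unfolding t_def by auto
    have t_small: "cmod (t b) \<le> 1" if b: "b \<in> B" for b
    proof -
      have "e b = of_real (Re (e b))"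
        using eQ[OF b] by (metis Rats_cases' Re_complex_of_real of_real_divide of_real_of_int_eq)
      hence "cmod (t b) = \<bar>Re (e b) - of_int \<lfloor>Re (e b)\<rfloor>\<bar>"
        unfolding t_def by (metis norm_of_real of_real_diff of_real_of_int_eq)
      also have "\<dots> \<le> 1" by (simp add: abs_le_iff) linarith
      finally show ?thesis .
    qed
    have "house K (x - \<rho>) \<le> C0"
    proof (rule house_le)
      fix \<sigma> assume \<sigma>: "\<sigma> \<in> embeddings K"
      have wK: "b \<in> B \<Longrightarrow> w b \<in> K" for b using OK_in_K[OF wO] .
      have "x - \<rho> = (\<Sum>b\<in>B. t b * w b)"
        unfolding xe \<rho>_def t_def by (simp add: sum_subtractf algebra_simps)
      hence "cmod (\<sigma> (x - \<rho>)) = cmod (\<Sum>b\<in>B. t b * \<sigma> (w b))"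
        by (simp add: emb_sum[OF \<sigma>] emb_rational_mult[OF \<sigma>] K_mult K_Rats tQ wK)
      also have "\<dots> \<le> (\<Sum>b\<in>B. cmod (t b * \<sigma> (w b)))" by (rule norm_sum)
      also have "\<dots> \<le> (\<Sum>b\<in>B. 1 * house K (w b))"
      proof (rule sum_mono)
        fix b assume b: "b \<in> B"
        show "cmod (t b * \<sigma> (w b)) \<le> 1 * house K (w b)"
          unfolding norm_mult by (rule mult_mono[OF t_small[OF b] house_ge[OF \<sigma>]]) simp_all
      qed
      finally show "cmod (\<sigma> (x - \<rho>)) \<le> C0" unfolding C0_def by simp
    qed
    moreover have "\<rho> \<in> OK" unfolding \<rho>_def by (intro OK_sum OK_mult OK_of_int wO)
    ultimately show ?thesis by blast
  qed
  moreover have "C0 \<ge> 0" unfolding C0_def by (intro sum_nonneg house_nonneg)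
  ultimately show ?thesis by blast
qed

end

section \<open>Comaximality and partial fractions\<close>

definition localization :: "complex set \<Rightarrow> complex \<Rightarrow> complex set" where
  "localization K c = {r / c ^ k | r k. r \<in> ring_of_integers K}"

definition comaximal :: "complex set \<Rightarrow> complex \<Rightarrow> complex \<Rightarrow> bool" where
  "comaximal K u v \<longleftrightarrow> (\<exists>X\<in>ring_of_integers K. \<exists>Y\<in>ring_of_integers K. u * X + v * Y = 1)"

lemma RJ_eq_localization: "RJ K a J = localization K (aJ a J)"
  unfolding RJ_def localization_def ..

lemma comaximal_sym: "comaximal K u v \<Longrightarrow> comaximal K v u"
  unfolding comaximal_def by (auto simp: add.commute)

context numfield
begin

lemma comaximal_1: "comaximal K u 1"
  unfolding comaximal_def using OK_0 OK_1 by force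

text \<open>Comaximality with u is preserved under products: multiply the two Bezout relations.\<close>
lemma comaximal_mult:
  assumes "u \<in> OK" "v \<in> OK" "w \<in> OK" and "comaximal K u v" "comaximal K u w"
  shows "comaximal K u (v * w)"
proof -
  obtain X Y where XY: "X \<in> OK" "Y \<in> OK" "u * X + v * Y = 1"
    using assms(4) unfolding comaximal_def by blast
  obtain X' Y' where XY': "X' \<in> OK" "Y' \<in> OK" "u * X' + w * Y' = 1"
    using assms(5) unfolding comaximal_def by blast
  have "u * (X * u * X' + X * w * Y' + v * Y * X') + (v * w) * (Y * Y') = (u * X + v * Y) * (u * X' + w * Y')"
    by (simp add: algebra_simps)
  also have "\<dots> = 1" using XY XY' by simp
  finally have "u * (X * u * X' + X * w * Y' + v * Y * X') + (v * w) * (Y * Y') = 1" .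
  moreover have "X * u * X' + X * w * Y' + v * Y * X' \<in> OK"
    using assms(1-3) XY XY' by (intro OK_add OK_mult)
  moreover have "Y * Y' \<in> OK" using XY XY' by (intro OK_mult)
  ultimately show ?thesis unfolding comaximal_def by blast
qed

lemma comaximal_prod:
  assumes "u \<in> OK" "\<forall>j\<in>J. a j \<in> OK \<and> comaximal K u (a j)"
  shows "comaximal K u (\<Prod>j\<in>J. a j)"
  using assms(2)
proof (induction J rule: infinite_finite_induct)
  case (insert x F)
  then show ?case using assms(1) by (simp add: comaximal_mult OK_prod)
qed (simp_all add: comaximal_1)

lemma comaximal_powers:
  assumes "u \<in> OK" "v \<in> OK" "comaximal K u v"
  shows "comaximal K (u ^ k) (v ^ k)"
proof -
  have "comaximal K v (u ^ k)"
    using comaximal_prod[of v "{..<k}" "\<lambda>_. u"] assms comaximal_sym by simp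
  then have "comaximal K (u ^ k) v" by (rule comaximal_sym)
  then show ?thesis
    using comaximal_prod[of "u ^ k" "{..<k}" "\<lambda>_. v"] assms OK_power by simp
qed

lemma partial_fraction_element:
  assumes C0: "C0 \<ge> 0" "\<forall>y\<in>K. \<exists>\<rho>\<in>OK. house K (y - \<rho>) \<le> C0"
    and \<alpha>: "\<alpha> \<in> OK" "\<alpha> \<noteq> 0" and \<beta>: "\<beta> \<in> OK" "\<beta> \<noteq> 0" and cm: "comaximal K \<alpha> \<beta>"
    and x: "x \<in> localization K (\<alpha> * \<beta>)"
  shows "\<exists>u v. u \<in> localization K \<alpha> \<and> v \<in> localization K \<beta> \<and>
     x = u + v \<and> (x = 0 \<longrightarrow> u = 0 \<and> v = 0) \<and> house K u \<le> C0"
proof (cases "x = 0")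
  case True
  have "(0::complex) \<in> localization K c" for c
    unfolding localization_def using OK_0 by force
  then show ?thesis using True C0(1) house_0 by (intro exI[of _ 0]) auto
next
  case False
  obtain r k where rk: "r \<in> OK" "x = r / (\<alpha> * \<beta>) ^ k" using x unfolding localization_def by blast
  obtain X Y where XY: "X \<in> OK" "Y \<in> OK" "\<alpha> ^ k * X + \<beta> ^ k * Y = 1"
    using comaximal_powers[OF \<alpha>(1) \<beta>(1) cm, of k] unfolding comaximal_def by blast
  have nz: "\<alpha> ^ k \<noteq> 0" "\<beta> ^ k \<noteq> 0" using \<alpha> \<beta> by simp_all
  have "x = r * (\<alpha> ^ k * X + \<beta> ^ k * Y) / (\<alpha> ^ k * \<beta> ^ k)"
    using rk XY(3) by (simp add: power_mult_distrib)
  also have "\<dots> = r * Y / \<alpha> ^ k + r * X / \<beta> ^ k" using nz by (simp add: field_simps)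
  finally have x_split: "x = r * Y / \<alpha> ^ k + r * X / \<beta> ^ k" .
  have "r * Y / \<alpha> ^ k \<in> K"
    using rk XY \<alpha> by (intro K_divide K_mult K_power OK_in_K) auto
  then obtain \<rho> where \<rho>: "\<rho> \<in> OK" "house K (r * Y / \<alpha> ^ k - \<rho>) \<le> C0" using C0 by blast
  have "r * Y / \<alpha> ^ k - \<rho> = (r * Y - \<rho> * \<alpha> ^ k) / \<alpha> ^ k" using nz by (simp add: field_simps)
  moreover have "r * Y - \<rho> * \<alpha> ^ k \<in> OK"
    using rk XY \<rho> \<alpha> by (intro OK_diff OK_mult OK_power) auto
  ultimately have u: "r * Y / \<alpha> ^ k - \<rho> \<in> localization K \<alpha>" unfolding localization_def by blast
  have "r * X / \<beta> ^ k + \<rho> = (r * X + \<rho> * \<beta> ^ k) / \<beta> ^ k" using nz by (simp add: field_simps)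
  moreover have "r * X + \<rho> * \<beta> ^ k \<in> OK"
    using rk XY \<rho> \<beta> by (intro OK_add OK_mult OK_power) auto
  ultimately have v: "r * X / \<beta> ^ k + \<rho> \<in> localization K \<beta>" unfolding localization_def by blast
  show ?thesis using u v \<rho>(2) False
    by (intro exI[of _ "r * Y / \<alpha> ^ k - \<rho>"] exI[of _ "r * X / \<beta> ^ k + \<rho>"]) (simp add: x_split)
qed

lemma partial_fraction_fps:
  assumes C0: "C0 \<ge> 0" "\<forall>y\<in>K. \<exists>\<rho>\<in>OK. house K (y - \<rho>) \<le> C0"
    and \<alpha>: "\<alpha> \<in> OK" "\<alpha> \<noteq> 0" and \<beta>: "\<beta> \<in> OK" "\<beta> \<noteq> 0" and cm: "comaximal K \<alpha> \<beta>"
    and f: "\<forall>n. fps_nth f n \<in> localization K (\<alpha> * \<beta>)"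
  shows "\<exists>g h. f = g + h \<and> (\<forall>n. fps_nth g n \<in> localization K \<alpha> \<and>
      fps_nth h n \<in> localization K \<beta> \<and> house K (fps_nth g n) \<le> C0) \<and>
      tabs g \<le> tabs f \<and> tabs h \<le> tabs f"
  using partial_fraction_element[OF C0 \<alpha> \<beta> cm] f
  by (intro fps_split_coefficientwise) blast

lemma partial_fraction_fps_bounded_side:
  assumes C0: "C0 \<ge> 0" "\<forall>y\<in>K. \<exists>\<rho>\<in>OK. house K (y - \<rho>) \<le> C0"
    and \<alpha>: "\<alpha> \<in> OK" "\<alpha> \<noteq> 0" and \<beta>: "\<beta> \<in> OK" "\<beta> \<noteq> 0" and cm: "comaximal K \<alpha> \<beta>"
    and f: "\<forall>n. fps_nth f n \<in> localization K (\<alpha> * \<beta>)"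
  shows "\<exists>g h. f = g + h \<and> (\<forall>n. fps_nth g n \<in> localization K \<alpha> \<and> fps_nth h n \<in> localization K \<beta>) \<and>
      tabs g \<le> tabs f \<and> tabs h \<le> tabs f \<and>
      (bound_first \<longrightarrow> (\<forall>n. house K (fps_nth g n) \<le> C0)) \<and>
      (\<not> bound_first \<longrightarrow> (\<forall>n. house K (fps_nth h n) \<le> C0))"
proof (cases bound_first)
  case True
  then show ?thesis using partial_fraction_fps[OF C0 \<alpha> \<beta> cm f] by blast
next
  case False
  have "\<forall>n. fps_nth f n \<in> localization K (\<beta> * \<alpha>)" using f by (simp add: mult.commute)
  from partial_fraction_fps[OF C0 \<beta> \<alpha> comaximal_sym[OF cm] this] obtain h g where
    "f = h + g" "\<forall>n. fps_nth h n \<in> localization K \<beta> \<and> fps_nth g n \<in> localization K \<alpha> \<and>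
      house K (fps_nth h n) \<le> C0" "tabs h \<le> tabs f" "tabs g \<le> tabs f"
    by blast
  then show ?thesis using False by (intro exI[of _ g] exI[of _ h]) (simp add: add.commute)
qed

lemma coprime_factorization:
  assumes "finite I" "i \<in> I"
    and a: "\<forall>j\<in>I. a j \<in> OK \<and> a j \<noteq> 0"
    and cop: "\<forall>j\<in>I. \<forall>k\<in>I. j \<noteq> k \<longrightarrow> (\<exists>x\<in>OK. \<exists>y\<in>OK. a j * x + a k * y = 1)"
  shows "a i \<in> OK" "a i \<noteq> 0" "aJ a (I - {i}) \<in> OK" "aJ a (I - {i}) \<noteq> 0"
    "comaximal K (a i) (aJ a (I - {i}))" "aJ a I = a i * aJ a (I - {i})"
proof -
  show "a i \<in> OK" "a i \<noteq> 0" using a assms(2) by auto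
  show "aJ a (I - {i}) \<in> OK" "aJ a (I - {i}) \<noteq> 0"
    unfolding aJ_def using a assms(1) by (auto intro: OK_prod)
  show "aJ a I = a i * aJ a (I - {i})"
    unfolding aJ_def using prod.remove[OF assms(1,2)] by simp
  show "comaximal K (a i) (aJ a (I - {i}))"
    unfolding aJ_def using a cop assms(2) unfolding comaximal_def
    by (intro comaximal_prod[unfolded comaximal_def]) auto
qed

end

lemma DJ_memberI:
  assumes "\<forall>n. fps_nth f n \<in> RJ K a J" and "1 \<notin> J \<Longrightarrow> \<forall>n. house K (fps_nth f n) \<le> C"
  shows "f \<in> DJ K a J"
  using assms bounded_house_small_growth unfolding DJ_def by blast

theorem proposition2p16:
  fixes K :: "complex set"
  assumes "number_field K"
  shows "\<exists>C1 > 0. \<forall>(I :: nat set) (a :: nat \<Rightarrow> complex) (f :: complex fps) i.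
     finite I \<longrightarrow> 1 \<in> I \<longrightarrow>
     (\<forall>j\<in>I. a j \<in> ring_of_integers K \<and> a j \<noteq> 0 \<and>
             \<not> (\<exists>b\<in>ring_of_integers K. a j * b = 1)) \<longrightarrow>
     (\<forall>j\<in>I. \<forall>k\<in>I. j \<noteq> k \<longrightarrow>
        (\<exists>x\<in>ring_of_integers K. \<exists>y\<in>ring_of_integers K. a j * x + a k * y = 1)) \<longrightarrow>
     f \<in> DJ K a I \<longrightarrow> i \<in> I \<longrightarrow>
     (\<exists>g h. g \<in> DJ K a {i} \<and> h \<in> DJ K a (I - {i}) \<and> f = g + h \<and>
        tabs g \<le> tabs f \<and> tabs h \<le> tabs f \<and>
        (i = 1 \<longrightarrow> (\<forall>n. house K (fps_nth h n) < C1)) \<and>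
        (i \<noteq> 1 \<longrightarrow> (\<forall>n. house K (fps_nth g n) < C1)))"
proof -
  interpret numfield K by (rule numfield.intro) (fact assms)
  obtain C0 where C0: "C0 \<ge> 0" "\<forall>y\<in>K. \<exists>\<rho>\<in>OK. house K (y - \<rho>) \<le> C0"
    using covering_radius by blast
  show ?thesis
  proof (intro exI[of _ "C0 + 1"] conjI allI impI)
    show "C0 + 1 > 0" using C0(1) by simp
    fix I a f i
    assume fin: "finite I" and one: "1 \<in> I" and a: "\<forall>j\<in>I. a j \<in> OK \<and> a j \<noteq> 0 \<and> \<not> (\<exists>b\<in>OK. a j * b = 1)"
      and cop: "\<forall>j\<in>I. \<forall>k\<in>I. j \<noteq> k \<longrightarrow> (\<exists>x\<in>OK. \<exists>y\<in>OK. a j * x + a k * y = 1)"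
      and f: "f \<in> DJ K a I" and i: "i \<in> I"
    have "\<forall>j\<in>I. a j \<in> OK \<and> a j \<noteq> 0" using a by blast
    note ab = coprime_factorization[OF fin i this cop]
    have R: "RJ K a I = localization K (a i * aJ a (I - {i}))"
      "RJ K a {i} = localization K (a i)" "RJ K a (I - {i}) = localization K (aJ a (I - {i}))"
      unfolding RJ_eq_localization ab(6) by (simp_all add: aJ_def)
    have "\<forall>n. fps_nth f n \<in> localization K (a i * aJ a (I - {i}))"
      using f unfolding DJ_def R(1) by blast
    from partial_fraction_fps_bounded_side[OF C0 ab(1-5) this, of "i \<noteq> 1"]
    obtain g h where gh: "f = g + h" "\<forall>n. fps_nth g n \<in> RJ K a {i} \<and> fps_nth h n \<in> RJ K a (I - {i})"
      "tabs g \<le> tabs f" "tabs h \<le> tabs f"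
      "i \<noteq> 1 \<longrightarrow> (\<forall>n. house K (fps_nth g n) \<le> C0)" "i = 1 \<longrightarrow> (\<forall>n. house K (fps_nth h n) \<le> C0)"
      unfolding R(2,3) by blast
    have "g \<in> DJ K a {i}" by (rule DJ_memberI) (use gh(2,5) in auto)
    moreover have "h \<in> DJ K a (I - {i})" by (rule DJ_memberI) (use gh(2,6) one in auto)
    moreover have "i = 1 \<longrightarrow> (\<forall>n. house K (fps_nth h n) < C0 + 1)"
      "i \<noteq> 1 \<longrightarrow> (\<forall>n. house K (fps_nth g n) < C0 + 1)"
      using gh(5,6) by (meson less_add_one order_le_less_trans)+
    ultimately show "\<exists>g h. g \<in> DJ K a {i} \<and> h \<in> DJ K a (I - {i}) \<and> f = g + h \<and>
        tabs g \<le> tabs f \<and> tabs h \<le> tabs f \<and>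
        (i = 1 \<longrightarrow> (\<forall>n. house K (fps_nth h n) < C0 + 1)) \<and>
        (i \<noteq> 1 \<longrightarrow> (\<forall>n. house K (fps_nth g n) < C0 + 1))"
      using gh(1,3,4) by blast
  qed
qed

end
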